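(* Let $G=(V,E,m,w)$ be a weighted graph admitting an intrinsic metric $\rho$ with finite balls and finite jump size $s=\sup_{x\sim y}\rho(x,y)$. Suppose $G$ has polynomial volume growth: there are $x_0\in V$ and constants $\alpha, C$ with $m(B_R(x_0))\le C(1+R)^{\alpha}$ for all $R>0$. Let $k>0$ and $u\in\mathcal{P}_k(G)$. Then for any $q\in\mathbb{N}$ with $4q>2k+\alpha+2$, $\partial_t^q u\equiv 0$. In particular, there exist functions $p_i$ on $V$, $0\le i\le q-1$, such that $u(x,t)=\sum_{i=0}^{q-1}p_i(x)t^i$.
   Context: A weighted graph $G=(V,E,m,w)$ consists of a locally finite, simple, undirected, connected graph $(V,E)$, a symmetric edge weight $w:E\to(0,\infty)$, and a vertex weight $m:V\to(0,\infty)$; $m(\Omega)=\sum_{x\in\Omega}m_x$. The Laplacian is $\Delta f(x)=\sum_{y\sim x}\frac{w_{xy}}{m_x}(f(y)-f(x))$. A (pseudo)metric $\rho$ on $V$ is intrinsic if $\sum_{y\sim x}w_{xy}\rho^2(x,y)\le m_x$ for all $x$; $B_R(x)=\{y:\rho(y,x)\le R\}$. An ancient solution is a function $u(x,t)$ on $V\times(-\infty,0]$, (infinitely) differentiable in $t$, with $\partial_t u=\Delta u$. $\mathcal{P}_k(G)$ is the space of ancient solutions $u$ for which there are $x_0\in V$ and $C_u$ with $\sup_{B_R(x_0)\times[-R^2,0]}|u|\le C_u(1+R)^k$ for all $R>0$. *)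

theory Defs
  imports "HOL-Analysis.Analysis"
begin

text \<open>Weighted graph on the vertex type 'v (V = UNIV). adj is the edge relation,
  w the edge weight, m the vertex weight.\<close>
definition weighted_graph ::
  "('v \<Rightarrow> 'v \<Rightarrow> bool) \<Rightarrow> ('v \<Rightarrow> 'v \<Rightarrow> real) \<Rightarrow> ('v \<Rightarrow> real) \<Rightarrow> bool" where
  "weighted_graph adj w m \<longleftrightarrow>
     (\<forall>x. \<not> adj x x) \<and>
     (\<forall>x y. adj x y \<longrightarrow> adj y x) \<and>
     (\<forall>x. finite {y. adj x y}) \<and>
     (\<forall>x y. adj\<^sup>*\<^sup>* x y) \<and>
     (\<forall>x y. adj x y \<longrightarrow> w x y = w y x \<and> w x y > 0) \<and>
     (\<forall>x. m x > 0)"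

definition vol :: "('v \<Rightarrow> real) \<Rightarrow> 'v set \<Rightarrow> real" where
  "vol m A = (\<Sum>x\<in>A. m x)"

definition laplacian ::
  "('v \<Rightarrow> 'v \<Rightarrow> bool) \<Rightarrow> ('v \<Rightarrow> 'v \<Rightarrow> real) \<Rightarrow> ('v \<Rightarrow> real) \<Rightarrow> ('v \<Rightarrow> real) \<Rightarrow> 'v \<Rightarrow> real" where
  "laplacian adj w m f x = (\<Sum>y\<in>{y. adj x y}. w x y / m x * (f y - f x))"

definition pseudometric :: "('v \<Rightarrow> 'v \<Rightarrow> real) \<Rightarrow> bool" where
  "pseudometric \<rho> \<longleftrightarrow>
     (\<forall>x y. \<rho> x y \<ge> 0) \<and> (\<forall>x. \<rho> x x = 0) \<and> (\<forall>x y. \<rho> x y = \<rho> y x) \<and>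
     (\<forall>x y z. \<rho> x z \<le> \<rho> x y + \<rho> y z)"

definition intrinsic ::
  "('v \<Rightarrow> 'v \<Rightarrow> bool) \<Rightarrow> ('v \<Rightarrow> 'v \<Rightarrow> real) \<Rightarrow> ('v \<Rightarrow> real) \<Rightarrow> ('v \<Rightarrow> 'v \<Rightarrow> real) \<Rightarrow> bool" where
  "intrinsic adj w m \<rho> \<longleftrightarrow> pseudometric \<rho> \<and>
     (\<forall>x. (\<Sum>y\<in>{y. adj x y}. w x y * (\<rho> x y)\<^sup>2) \<le> m x)"

definition ball_rho :: "('v \<Rightarrow> 'v \<Rightarrow> real) \<Rightarrow> 'v \<Rightarrow> real \<Rightarrow> 'v set" where
  "ball_rho \<rho> x R = {y. \<rho> y x \<le> R}"

definition time_derivs :: "('v \<Rightarrow> real \<Rightarrow> real) \<Rightarrow> (nat \<Rightarrow> 'v \<Rightarrow> real \<Rightarrow> real) \<Rightarrow> bool" where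
  "time_derivs u D \<longleftrightarrow>
     (\<forall>x t. t \<le> 0 \<longrightarrow> D 0 x t = u x t) \<and>
     (\<forall>n x t. t \<le> 0 \<longrightarrow>
        ((D n x) has_real_derivative D (Suc n) x t) (at t within {..0}))"

definition ancient_solution ::
  "('v \<Rightarrow> 'v \<Rightarrow> bool) \<Rightarrow> ('v \<Rightarrow> 'v \<Rightarrow> real) \<Rightarrow> ('v \<Rightarrow> real) \<Rightarrow> ('v \<Rightarrow> real \<Rightarrow> real) \<Rightarrow> bool" where
  "ancient_solution adj w m u \<longleftrightarrow>
     (\<exists>D. time_derivs u D \<and>
        (\<forall>x t. t \<le> 0 \<longrightarrow> D 1 x t = laplacian adj w m (\<lambda>y. u y t) x))"

definition poly_growth_ancient ::
  "('v \<Rightarrow> 'v \<Rightarrow> bool) \<Rightarrow> ('v \<Rightarrow> 'v \<Rightarrow> real) \<Rightarrow> ('v \<Rightarrow> real) \<Rightarrow> ('v \<Rightarrow> 'v \<Rightarrow> real)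
    \<Rightarrow> real \<Rightarrow> ('v \<Rightarrow> real \<Rightarrow> real) \<Rightarrow> bool" where
  "poly_growth_ancient adj w m \<rho> k u \<longleftrightarrow> ancient_solution adj w m u \<and>
     (\<exists>x0 Cu. \<forall>R>0. \<forall>y t. y \<in> ball_rho \<rho> x0 R \<and> - (R\<^sup>2) \<le> t \<and> t \<le> 0
          \<longrightarrow> \<bar>u y t\<bar> \<le> Cu * (1 + R) powr k)"

end

(* For a tower D of time derivatives of an ancient solution, let E n b r be the integral over
   [-b, 0] of the sum of m x * (D n x t)^2 over the ball B_r(x0). Multiplying the heat equation by
   cutoffs of slope 1/sqrt b, summing by parts (the intrinsic metric bounds the energy of the
   cutoffs by the vertex measure) and averaging in time gives the Caccioppoli-type inequality
   E (n+1) b r <= 25/(2 b^2) * E n (4b) (r + 2 sqrt b + s). Iterating q times and bounding E 0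
   by the growth of u and of the volume yields, for every vertex x,
   m x * int_{-sigma^2}^0 (D q x t)^2 dt <= K * sigma^(2 + alpha + 2k - 4q),
   which tends to 0 as sigma grows because 4q > 2k + alpha + 2. Hence D q = 0, and Taylor's
   formula on (-infinity, 0] makes u a polynomial of degree < q in t. *)

theory Submission
  imports Defs
begin

section \<open>Calculus on the half-line\<close>

lemma at_within_nonpos_nontrivial:
  assumes "t \<le> (0::real)"
  shows "at t within {..0} \<noteq> bot"
proof
  assume "at t within {..0} = bot"
  moreover have "at_left t \<le> at t within {..0}"
    using assms by (intro at_le) auto
  ultimately show False
    by (simp add: bot_unique)
qed

lemma has_real_derivative_nonpos_unique:
  assumes "t \<le> 0" "(f has_real_derivative a) (at t within {..0})"
    and "(g has_real_derivative b) (at t within {..0})" and "\<And>s. s \<le> 0 \<Longrightarrow> f s = g s"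
  shows "a = b"
proof -
  have "(g has_real_derivative a) (at t within {..0})"
    using assms by (intro has_field_derivative_transform_within[OF assms(2), of 1]) auto
  then show ?thesis
    using assms(3) at_within_nonpos_nontrivial[OF assms(1)] by (rule has_field_derivative_unique)
qed

lemma taylor_polynomial_nonpos:
  fixes f :: "nat \<Rightarrow> real \<Rightarrow> real"
  assumes "\<And>n t. t \<le> 0 \<Longrightarrow> (f n has_real_derivative f (Suc n) t) (at t within {..0})"
    and "\<And>t. t \<le> 0 \<Longrightarrow> f q t = 0"
    and "t \<le> 0"
  shows "f 0 t = (\<Sum>i<q. f i 0 / fact i * t ^ i)"
  using assms
proof (induction q arbitrary: f t)
  case 0
  then show ?case by simp
next
  case (Suc q)
  define P where "P t = (\<Sum>i<Suc q. f i 0 / fact i * t ^ i)" for t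
  have f1: "f 1 t = (\<Sum>i<q. f (Suc i) 0 / fact i * t ^ i)" if "t \<le> 0" for t
    using Suc.IH[of "\<lambda>n. f (Suc n)" t] Suc.prems(1,2) that by simp
  have "(P has_real_derivative (\<Sum>i<Suc q. f i 0 / fact i * (real i * t ^ (i - 1))))
      (at t within {..0})" for t
    unfolding P_def using DERIV_pow by (intro DERIV_sum DERIV_cmult) simp
  moreover have "(\<Sum>i<Suc q. f i 0 / fact i * (real i * t ^ (i - 1))) = f 1 t" if "t \<le> 0" for t
    unfolding f1[OF that] sum.lessThan_Suc_shift
    by (simp add: fact_Suc del: of_nat_Suc)
  ultimately have "((\<lambda>t. f 0 t - P t) has_real_derivative 0) (at t within {..0})" if "t \<le> 0" for t
    using DERIV_diff[OF Suc.prems(1)[OF that, of 0]] that by fastforce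
  then obtain c where c: "\<And>t. t \<le> 0 \<Longrightarrow> f 0 t - P t = c"
    using has_field_derivative_zero_constant[of "{..0::real}" "\<lambda>t. f 0 t - P t"] by auto
  have "P 0 = f 0 0"
    unfolding P_def by (simp add: sum.lessThan_Suc_shift)
  then have "c = 0"
    using c[of 0] by simp
  then show ?case
    using c[OF Suc.prems(3)] unfolding P_def by simp
qed

lemma integrable_on_nonpos_interval:
  fixes f :: "real \<Rightarrow> real"
  assumes "continuous_on {..0} f" "b \<le> 0"
  shows "f integrable_on {a..b}"
  using assms by (intro integrable_continuous_interval continuous_on_subset[OF assms(1)]) auto

text \<open>Choose \<open>t\<^sub>0 \<in> [-2a, -a]\<close> where \<open>F\<close> is minimal, integrate the inequality over
  \<open>[t\<^sub>0, 0]\<close> and drop \<open>F 0 \<ge> 0\<close>; the minimum is at most the mean of \<open>F\<close> over \<open>[-2a, -a]\<close>.\<close>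
lemma differential_inequality_integral_le:
  fixes F F' X Y :: "real \<Rightarrow> real" and a c :: real
  assumes "a > 0" "c > 0"
    and F': "\<And>t. t \<le> 0 \<Longrightarrow> (F has_real_derivative F' t) (at t within {..0})"
    and X: "continuous_on {..0} X" and Y: "continuous_on {..0} Y"
    and nonneg: "\<And>t. t \<le> 0 \<Longrightarrow> F t \<ge> 0 \<and> X t \<ge> 0 \<and> Y t \<ge> 0"
    and ineq: "\<And>t. t \<le> 0 \<Longrightarrow> X t \<le> - c * F' t + Y t"
  shows "integral {-a..0} X \<le> c / a * integral {-2*a..-a} F + integral {-2*a..0} Y"
proof -
  have F: "continuous_on {..0} F"
    using DERIV_continuous[OF F'] by (auto simp: continuous_on_eq_continuous_within)
  obtain t0 where t0: "-2*a \<le> t0" "t0 \<le> -a" and min: "\<And>t. t \<in> {-2*a..-a} \<Longrightarrow> F t0 \<le> F t"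
    using continuous_attains_inf[of "{-2*a..-a}" F] continuous_on_subset[OF F] \<open>a > 0\<close> by auto
  have "a * F t0 = integral {-2*a..-a} (\<lambda>_. F t0)"
    using \<open>a > 0\<close> by simp
  also have "\<dots> \<le> integral {-2*a..-a} F"
    using \<open>a > 0\<close> min by (intro integral_le integrable_on_nonpos_interval[OF F]) auto
  finally have mean: "c * F t0 \<le> c / a * integral {-2*a..-a} F"
    using \<open>a > 0\<close> \<open>c > 0\<close> by (simp add: field_simps)
  have "(F' has_integral F 0 - F t0) {t0..0}"
    using t0 \<open>a > 0\<close> DERIV_subset[OF F']
    by (intro fundamental_theorem_of_calculus)
      (auto simp: has_real_derivative_iff_has_vector_derivative[symmetric])
  then have "((\<lambda>t. - c * F' t + Y t) has_integral - c * (F 0 - F t0) + integral {t0..0} Y) {t0..0}"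
    using t0 \<open>a > 0\<close>
    by (intro has_integral_add has_integral_mult_right integrable_integral
        integrable_on_nonpos_interval[OF Y]) auto
  then have "integral {t0..0} X \<le> - c * (F 0 - F t0) + integral {t0..0} Y"
    using t0 \<open>a > 0\<close> ineq
    by (intro has_integral_le[OF integrable_integral[OF integrable_on_nonpos_interval[OF X]]]) auto
  moreover have "integral {-a..0} X \<le> integral {t0..0} X"
    using t0 nonneg by (intro integral_subset_le integrable_on_nonpos_interval[OF X]) auto
  moreover have "integral {t0..0} Y \<le> integral {-2*a..0} Y"
    using t0 nonneg by (intro integral_subset_le integrable_on_nonpos_interval[OF Y]) auto
  moreover have "c * F 0 \<ge> 0"
    using nonneg[of 0] \<open>c > 0\<close> by simp
  ultimately show ?thesis
    using mean by (simp add: algebra_simps)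
qed

lemma powr_le_max_powr_mult:
  fixes y \<sigma> A \<beta> :: real
  assumes "1 \<le> \<sigma>" "\<sigma> \<le> y" "y \<le> A * \<sigma>"
  shows "y powr \<beta> \<le> max 1 (A powr \<beta>) * \<sigma> powr \<beta>"
proof (cases "\<beta> \<ge> 0")
  case True
  have "\<sigma> \<le> A * \<sigma>"
    using assms by linarith
  then have "A \<ge> 1"
    using assms(1) by (simp add: mult_le_cancel_right2)
  have "y powr \<beta> \<le> (A * \<sigma>) powr \<beta>"
    using True assms by (intro powr_mono2) auto
  also have "\<dots> = A powr \<beta> * \<sigma> powr \<beta>"
    using \<open>A \<ge> 1\<close> assms(1) by (simp add: powr_mult)
  also have "\<dots> \<le> max 1 (A powr \<beta>) * \<sigma> powr \<beta>"
    by (intro mult_right_mono) auto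
  finally show ?thesis .
next
  case False
  have "y powr \<beta> \<le> \<sigma> powr \<beta>"
    using False assms by (intro powr_mono2') auto
  also have "\<dots> \<le> max 1 (A powr \<beta>) * \<sigma> powr \<beta>"
    using mult_right_mono[of 1 "max 1 (A powr \<beta>)" "\<sigma> powr \<beta>"] by simp
  finally show ?thesis .
qed

lemma nonpos_if_le_powr_neg:
  fixes c K e \<sigma>\<^sub>0 :: real
  assumes "e < 0" and le: "\<And>\<sigma>. \<sigma> \<ge> \<sigma>\<^sub>0 \<Longrightarrow> c \<le> K * \<sigma> powr e"
  shows "c \<le> 0"
proof (rule ccontr)
  assume "\<not> c \<le> 0"
  have "((\<lambda>\<sigma>. K * \<sigma> powr e) \<longlongrightarrow> K * 0) at_top"
    by (intro tendsto_mult tendsto_const tendsto_neg_powr[OF \<open>e < 0\<close>] filterlim_ident)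
  then have "eventually (\<lambda>\<sigma>. K * \<sigma> powr e < c) at_top"
    using \<open>\<not> c \<le> 0\<close> by (intro order_tendstoD) auto
  then have "eventually (\<lambda>\<sigma>. K * \<sigma> powr e < c \<and> \<sigma> \<ge> \<sigma>\<^sub>0) at_top"
    by (intro eventually_conj eventually_ge_at_top)
  then obtain \<sigma> where "K * \<sigma> powr e < c" "\<sigma> \<ge> \<sigma>\<^sub>0"
    by (auto simp: eventually_at_top_linorder)
  then show False
    using le[of \<sigma>] by linarith
qed

section \<open>Sums over edges and cutoff functions\<close>

text \<open>The sum runs over ordered pairs, so every edge inside \<open>S\<close> is counted twice.\<close>
definition edge_sum :: "('v \<Rightarrow> 'v \<Rightarrow> bool) \<Rightarrow> 'v set \<Rightarrow> ('v \<Rightarrow> 'v \<Rightarrow> real) \<Rightarrow> real" where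
  "edge_sum adj S F = (\<Sum>(x, y)\<in>Sigma S (\<lambda>x. {y\<in>S. adj x y}). F x y)"

lemma edge_sum_add: "edge_sum adj S (\<lambda>x y. F x y + G x y) = edge_sum adj S F + edge_sum adj S G"
  unfolding edge_sum_def by (simp add: sum.distrib split_def)

lemma edge_sum_minus: "edge_sum adj S (\<lambda>x y. - F x y) = - edge_sum adj S F"
  unfolding edge_sum_def by (simp add: sum_negf split_def)

lemma edge_sum_cmult: "edge_sum adj S (\<lambda>x y. c * F x y) = c * edge_sum adj S F"
  unfolding edge_sum_def by (simp add: sum_distrib_left split_def)

lemma edge_sum_cong:
  "(\<And>x y. x \<in> S \<Longrightarrow> y \<in> S \<Longrightarrow> adj x y \<Longrightarrow> F x y = G x y) \<Longrightarrow> edge_sum adj S F = edge_sum adj S G"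
  unfolding edge_sum_def by (rule sum.cong) auto

lemma edge_sum_mono:
  "(\<And>x y. x \<in> S \<Longrightarrow> y \<in> S \<Longrightarrow> adj x y \<Longrightarrow> F x y \<le> G x y) \<Longrightarrow> edge_sum adj S F \<le> edge_sum adj S G"
  unfolding edge_sum_def by (rule sum_mono) auto

lemma edge_sum_nonneg:
  "(\<And>x y. x \<in> S \<Longrightarrow> y \<in> S \<Longrightarrow> adj x y \<Longrightarrow> 0 \<le> F x y) \<Longrightarrow> 0 \<le> edge_sum adj S F"
  unfolding edge_sum_def by (rule sum_nonneg) auto

lemma edge_sum_swap:
  assumes "\<And>x y. adj x y \<Longrightarrow> adj y x"
  shows "edge_sum adj S F = edge_sum adj S (\<lambda>x y. F y x)"
  unfolding edge_sum_def
  by (rule sum.reindex_bij_witness[of _ prod.swap prod.swap]) (auto intro: assms)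

lemma edge_sum_iterated:
  "finite S \<Longrightarrow> edge_sum adj S F = (\<Sum>x\<in>S. \<Sum>y\<in>{y\<in>S. adj x y}. F x y)"
  unfolding edge_sum_def by (subst sum.Sigma) auto

lemma continuous_on_edge_sum:
  "(\<And>x y. continuous_on T (F x y)) \<Longrightarrow> continuous_on T (\<lambda>t. edge_sum adj S (\<lambda>x y. F x y t))"
  unfolding edge_sum_def by (intro continuous_on_sum) (auto simp: split_def)

lemma has_real_derivative_edge_sum:
  "(\<And>x y. (F x y has_real_derivative F' x y) (at t within T)) \<Longrightarrow>
    ((\<lambda>t. edge_sum adj S (\<lambda>x y. F x y t)) has_real_derivative edge_sum adj S F') (at t within T)"
  unfolding edge_sum_def by (intro DERIV_sum) (auto simp: split_def)

lemma square_add_le: "(x + y)\<^sup>2 \<le> 2 * (x\<^sup>2 + y\<^sup>2)" for x y :: real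
  using sum_squares_bound[of x y] by (simp add: power2_sum)

text \<open>With \<open>a = \<phi> x\<close>, \<open>b = \<phi> y\<close> for a cutoff \<open>\<phi>\<close> of slope \<open>L\<close> and \<open>r = \<rho> x y\<close>, the next two
  inequalities are the edgewise discrete product rules behind the Caccioppoli estimates.\<close>
lemma cutoff_product_rule_ineq:
  fixes a b va vb L r :: real
  assumes "0 \<le> a" "0 \<le> b" "\<bar>b - a\<bar> \<le> L * r" "0 \<le> L" "0 \<le> r"
  shows "(a\<^sup>2 + b\<^sup>2) / 2 * (vb - va)\<^sup>2
    \<le> 2 * ((b\<^sup>2 * vb - a\<^sup>2 * va) * (vb - va)) + 2 * L\<^sup>2 * r\<^sup>2 * (va\<^sup>2 + vb\<^sup>2)"
proof -
  define A where "A = (a + b) * (vb - va)"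
  define B where "B = (b - a) * (va + vb)"
  have "(b - a)\<^sup>2 \<le> (L * r)\<^sup>2"
    using assms(3) by (simp add: abs_le_square_iff[symmetric])
  then have "B\<^sup>2 \<le> (L * r)\<^sup>2 * (va + vb)\<^sup>2"
    unfolding B_def power_mult_distrib by (rule mult_right_mono) simp
  also have "\<dots> \<le> (L * r)\<^sup>2 * (2 * (va\<^sup>2 + vb\<^sup>2))"
    by (rule mult_left_mono[OF square_add_le]) simp
  finally have B2: "B\<^sup>2 \<le> 2 * L\<^sup>2 * r\<^sup>2 * (va\<^sup>2 + vb\<^sup>2)"
    by (simp add: power_mult_distrib algebra_simps)
  have A2: "A\<^sup>2 \<le> 2 * (a\<^sup>2 + b\<^sup>2) * (vb - va)\<^sup>2"
    using mult_right_mono[OF square_add_le[of a b], of "(vb - va)\<^sup>2"]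
    unfolding A_def by (simp add: power_mult_distrib)
  have "2 * ((b\<^sup>2 * vb - a\<^sup>2 * va) * (vb - va)) = (a\<^sup>2 + b\<^sup>2) * (vb - va)\<^sup>2 + A * B"
    unfolding A_def B_def by (simp add: field_simps power2_eq_square)
  moreover have "0 \<le> A\<^sup>2 / 4 + A * B + B\<^sup>2"
    using zero_le_power2[of "A / 2 + B"] by (simp add: power2_eq_square algebra_simps)
  ultimately show ?thesis
    using A2 B2 by (simp add: algebra_simps)
qed

lemma cutoff_cross_term_ineq:
  fixes a b ra rb va vb fa fb L r :: real
  assumes "0 \<le> a" "0 \<le> b" "\<bar>b - a\<bar> \<le> L * r" "0 \<le> L" "0 \<le> r"
    and "a \<noteq> 0 \<Longrightarrow> fa = 1" "b \<noteq> 0 \<Longrightarrow> fb = 1"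
  shows "- ((b - a) * (b * rb + a * ra) * (vb - va))
    \<le> r\<^sup>2 * (a\<^sup>2 * ra\<^sup>2 + b\<^sup>2 * rb\<^sup>2) / 2 + 2 * L\<^sup>2 * ((fa\<^sup>2 + fb\<^sup>2) / 2) * (vb - va)\<^sup>2"
proof (cases "a = 0 \<and> b = 0")
  case True
  then show ?thesis by simp
next
  case False
  define A where "A = b * rb + a * ra"
  define d where "d = vb - va"
  have "1 \<le> fa\<^sup>2 + fb\<^sup>2"
    using False assms(6,7) by (auto simp: add_increasing add_increasing2)
  then have fab: "L\<^sup>2 * d\<^sup>2 \<le> 2 * L\<^sup>2 * ((fa\<^sup>2 + fb\<^sup>2) / 2) * d\<^sup>2"
    using mult_left_mono[of 1 "fa\<^sup>2 + fb\<^sup>2" "L\<^sup>2 * d\<^sup>2"] by (simp add: algebra_simps)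
  have A2: "r\<^sup>2 * A\<^sup>2 / 4 \<le> r\<^sup>2 * (a\<^sup>2 * ra\<^sup>2 + b\<^sup>2 * rb\<^sup>2) / 2"
    using mult_left_mono[OF square_add_le[of "b * rb" "a * ra"], of "r\<^sup>2"]
    unfolding A_def by (simp add: power_mult_distrib algebra_simps)
  have "- ((b - a) * A * d) \<le> \<bar>b - a\<bar> * \<bar>A\<bar> * \<bar>d\<bar>"
    by (simp add: abs_mult[symmetric])
  also have "\<dots> \<le> (L * r) * \<bar>A\<bar> * \<bar>d\<bar>"
    by (intro mult_right_mono assms) auto
  also have "\<dots> \<le> r\<^sup>2 * A\<^sup>2 / 4 + L\<^sup>2 * d\<^sup>2"
    using zero_le_power2[of "r * \<bar>A\<bar> / 2 - L * \<bar>d\<bar>"] by (simp add: power2_eq_square algebra_simps)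
  finally show ?thesis
    using A2 fab unfolding A_def d_def by linarith
qed

definition cutoff :: "real \<Rightarrow> real \<Rightarrow> real \<Rightarrow> real" where
  "cutoff l c d = max 0 (min 1 (1 - (d - c) / l))"

lemma cutoff_nonneg: "0 \<le> cutoff l c d"
  and cutoff_le_one: "cutoff l c d \<le> 1"
  unfolding cutoff_def by auto

lemma cutoff_eq_one: "l > 0 \<Longrightarrow> d \<le> c \<Longrightarrow> cutoff l c d = 1"
  unfolding cutoff_def by (auto simp: field_simps)

lemma cutoff_nonzero_less: "l > 0 \<Longrightarrow> cutoff l c d \<noteq> 0 \<Longrightarrow> d < c + l"
  unfolding cutoff_def by (auto simp: field_simps max_def min_def split: if_splits)

lemma cutoff_lipschitz:
  assumes "l > 0"
  shows "\<bar>cutoff l c d - cutoff l c d'\<bar> \<le> \<bar>d - d'\<bar> / l"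
proof -
  have clamp: "\<bar>max 0 (min 1 a) - max 0 (min 1 a')\<bar> \<le> \<bar>a - a'\<bar>" for a a' :: real
    by (simp add: max_def min_def abs_if)
  have "\<bar>cutoff l c d - cutoff l c d'\<bar> \<le> \<bar>(1 - (d - c) / l) - (1 - (d' - c) / l)\<bar>"
    unfolding cutoff_def by (rule clamp)
  also have "(1 - (d - c) / l) - (1 - (d' - c) / l) = (d' - d) / l"
    by (simp add: diff_divide_distrib)
  also have "\<bar>(d' - d) / l\<bar> = \<bar>d - d'\<bar> / l"
    using assms by (simp add: abs_minus_commute)
  finally show ?thesis .
qed

section \<open>Caccioppoli inequalities\<close>

locale intrinsic_graph =
  fixes adj :: "'v \<Rightarrow> 'v \<Rightarrow> bool" and w :: "'v \<Rightarrow> 'v \<Rightarrow> real" and m :: "'v \<Rightarrow> real"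
    and \<rho> :: "'v \<Rightarrow> 'v \<Rightarrow> real"
  assumes adj_sym: "\<And>x y. adj x y \<Longrightarrow> adj y x"
    and w_sym: "\<And>x y. adj x y \<Longrightarrow> w x y = w y x"
    and w_pos: "\<And>x y. adj x y \<Longrightarrow> w x y > 0"
    and m_pos: "\<And>x. m x > 0"
    and finite_neighbours: "\<And>x. finite {y. adj x y}"
    and intrinsic_bound: "\<And>x. (\<Sum>y\<in>{y. adj x y}. w x y * (\<rho> x y)\<^sup>2) \<le> m x"
    and rho_sym: "\<And>x y. \<rho> x y = \<rho> y x"
    and rho_nonneg: "\<And>x y. \<rho> x y \<ge> 0"
    and rho_triangle: "\<And>x y z. \<rho> x z \<le> \<rho> x y + \<rho> y z"

lemma intrinsic_graphI:
  assumes "weighted_graph adj w m" "intrinsic adj w m \<rho>"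
  shows "intrinsic_graph adj w m \<rho>"
  using assms unfolding weighted_graph_def intrinsic_def pseudometric_def
  by unfold_locales auto

context intrinsic_graph
begin

lemma m_nonneg: "0 \<le> m x"
  using m_pos[of x] by simp

lemma w_nonneg: "adj x y \<Longrightarrow> 0 \<le> w x y"
  using w_pos[of x y] by simp

lemma rho_diff_le: "\<bar>\<rho> y z - \<rho> x z\<bar> \<le> \<rho> x y"
proof -
  have "\<rho> y z \<le> \<rho> y x + \<rho> x z" "\<rho> x z \<le> \<rho> x y + \<rho> y z"
    by (rule rho_triangle)+
  then show ?thesis
    using rho_sym[of x y] by auto
qed

lemma edge_sum_flip: "edge_sum adj S F = edge_sum adj S (\<lambda>x y. F y x)"
  by (rule edge_sum_swap) (rule adj_sym)

lemma green_formula: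
  assumes S: "finite S" and supp: "\<And>x. f x \<noteq> 0 \<Longrightarrow> x \<in> S \<and> {y. adj x y} \<subseteq> S"
  shows "(\<Sum>x\<in>S. m x * (f x * laplacian adj w m g x))
    = - (1/2) * edge_sum adj S (\<lambda>x y. w x y * (f y - f x) * (g y - g x))"
proof -
  have "m x * (f x * laplacian adj w m g x) = (\<Sum>y\<in>{y\<in>S. adj x y}. w x y * f x * (g y - g x))"
    if "x \<in> S" for x
  proof (cases "f x = 0")
    case False
    then have "{y\<in>S. adj x y} = {y. adj x y}"
      using supp by auto
    then show ?thesis
      unfolding laplacian_def sum_distrib_left using m_pos[of x]
      by (intro sum.cong) (auto simp: field_simps)
  qed simp
  then have "(\<Sum>x\<in>S. m x * (f x * laplacian adj w m g x))
      = edge_sum adj S (\<lambda>x y. w x y * f x * (g y - g x))"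
    by (simp add: edge_sum_iterated[OF S])
  moreover have "edge_sum adj S (\<lambda>x y. w x y * f x * (g y - g x))
      = edge_sum adj S (\<lambda>x y. w y x * f y * (g x - g y))"
    by (rule edge_sum_flip)
  moreover have "\<dots> = - edge_sum adj S (\<lambda>x y. w x y * f y * (g y - g x))"
    by (subst edge_sum_minus[symmetric], rule edge_sum_cong) (metis w_sym minus_diff_eq mult_minus_right)
  moreover have "edge_sum adj S (\<lambda>x y. w x y * (f y - f x) * (g y - g x))
      = edge_sum adj S (\<lambda>x y. w x y * f y * (g y - g x))
        + edge_sum adj S (\<lambda>x y. - (w x y * f x * (g y - g x)))"
    by (subst edge_sum_add[symmetric]) (rule edge_sum_cong, simp add: algebra_simps)
  ultimately show ?thesis
    by (simp add: edge_sum_minus)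
qed

lemma edge_sum_intrinsic_le:
  assumes S: "finite S" and g: "\<And>x. x \<in> S \<Longrightarrow> g x \<ge> 0"
  shows "edge_sum adj S (\<lambda>x y. w x y * (\<rho> x y)\<^sup>2 * (g x + g y)) \<le> 2 * (\<Sum>x\<in>S. m x * g x)"
proof -
  have "edge_sum adj S (\<lambda>x y. w x y * (\<rho> x y)\<^sup>2 * g x)
      = (\<Sum>x\<in>S. g x * (\<Sum>y\<in>{y\<in>S. adj x y}. w x y * (\<rho> x y)\<^sup>2))"
    by (simp add: edge_sum_iterated[OF S] sum_distrib_left algebra_simps)
  also have "\<dots> \<le> (\<Sum>x\<in>S. m x * g x)"
  proof (rule sum_mono)
    fix x assume "x \<in> S"
    have "(\<Sum>y\<in>{y\<in>S. adj x y}. w x y * (\<rho> x y)\<^sup>2) \<le> (\<Sum>y\<in>{y. adj x y}. w x y * (\<rho> x y)\<^sup>2)"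
      by (rule sum_mono2[OF finite_neighbours]) (auto intro!: mult_nonneg_nonneg w_nonneg)
    then have "g x * (\<Sum>y\<in>{y\<in>S. adj x y}. w x y * (\<rho> x y)\<^sup>2) \<le> g x * m x"
      using intrinsic_bound[of x] g[OF \<open>x \<in> S\<close>] by (intro mult_left_mono) auto
    then show "g x * (\<Sum>y\<in>{y\<in>S. adj x y}. w x y * (\<rho> x y)\<^sup>2) \<le> m x * g x"
      by (simp add: mult.commute)
  qed
  finally have "edge_sum adj S (\<lambda>x y. w x y * (\<rho> x y)\<^sup>2 * g x) \<le> (\<Sum>x\<in>S. m x * g x)" .
  moreover have "edge_sum adj S (\<lambda>x y. w x y * (\<rho> x y)\<^sup>2 * g y)
      = edge_sum adj S (\<lambda>x y. w x y * (\<rho> x y)\<^sup>2 * g x)"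
    by (subst edge_sum_flip) (rule edge_sum_cong, metis w_sym rho_sym)
  ultimately show ?thesis
    unfolding distrib_left edge_sum_add by simp
qed

definition cutoff_energy :: "'v set \<Rightarrow> ('v \<Rightarrow> real) \<Rightarrow> ('v \<Rightarrow> real) \<Rightarrow> real" where
  "cutoff_energy S \<phi> V = edge_sum adj S (\<lambda>x y. w x y * (((\<phi> x)\<^sup>2 + (\<phi> y)\<^sup>2) / 2 * (V y - V x)\<^sup>2))"

lemma cutoff_energy_nonneg: "0 \<le> cutoff_energy S \<phi> V"
  unfolding cutoff_energy_def by (intro edge_sum_nonneg mult_nonneg_nonneg w_nonneg) auto

lemma edge_sum_product_le_cutoff_energy:
  assumes "\<And>x. 0 \<le> \<psi> x" "\<And>x. \<psi> x \<le> \<phi> x"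
  shows "edge_sum adj S (\<lambda>x y. w x y * (\<psi> x * \<psi> y) * (V y - V x)\<^sup>2) \<le> cutoff_energy S \<phi> V"
  unfolding cutoff_energy_def
proof (rule edge_sum_mono)
  fix x y assume "adj x y"
  have "\<psi> x * \<psi> y \<le> ((\<psi> x)\<^sup>2 + (\<psi> y)\<^sup>2) / 2"
    using sum_squares_bound[of "\<psi> x" "\<psi> y"] by simp
  also have "\<dots> \<le> ((\<phi> x)\<^sup>2 + (\<phi> y)\<^sup>2) / 2"
    using assms by (intro divide_right_mono add_mono power_mono) auto
  finally have "\<psi> x * \<psi> y * (V y - V x)\<^sup>2 \<le> ((\<phi> x)\<^sup>2 + (\<phi> y)\<^sup>2) / 2 * (V y - V x)\<^sup>2"
    by (rule mult_right_mono) simp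
  then show "w x y * (\<psi> x * \<psi> y) * (V y - V x)\<^sup>2 \<le> w x y * (((\<phi> x)\<^sup>2 + (\<phi> y)\<^sup>2) / 2 * (V y - V x)\<^sup>2)"
    unfolding mult.assoc[of "w x y"] using w_nonneg[OF \<open>adj x y\<close>] by (rule mult_left_mono)
qed

lemma cutoff_energy_le:
  fixes V \<phi> :: "'v \<Rightarrow> real" and L :: real
  assumes S: "finite S" and "L \<ge> 0" and "\<And>x. 0 \<le> \<phi> x"
    and lip: "\<And>x y. adj x y \<Longrightarrow> \<bar>\<phi> y - \<phi> x\<bar> \<le> L * \<rho> x y"
    and supp: "\<And>x. \<phi> x \<noteq> 0 \<Longrightarrow> x \<in> S \<and> {y. adj x y} \<subseteq> S"
  shows "cutoff_energy S \<phi> V \<le> - 2 * (\<Sum>x\<in>S. m x * ((\<phi> x)\<^sup>2 * (2 * V x * laplacian adj w m V x)))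
    + 4 * L\<^sup>2 * (\<Sum>x\<in>S. m x * (V x)\<^sup>2)"
proof -
  define f where "f x = (\<phi> x)\<^sup>2 * V x" for x
  have "(\<Sum>x\<in>S. m x * ((\<phi> x)\<^sup>2 * (2 * V x * laplacian adj w m V x)))
      = 2 * (\<Sum>x\<in>S. m x * (f x * laplacian adj w m V x))"
    unfolding f_def sum_distrib_left by (rule sum.cong) (auto simp: algebra_simps)
  also have "\<dots> = - edge_sum adj S (\<lambda>x y. w x y * (f y - f x) * (V y - V x))"
    using supp by (subst green_formula[OF S]) (auto simp: f_def)
  finally have green: "- 2 * (\<Sum>x\<in>S. m x * ((\<phi> x)\<^sup>2 * (2 * V x * laplacian adj w m V x)))
      = 2 * edge_sum adj S (\<lambda>x y. w x y * (f y - f x) * (V y - V x))"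
    by simp
  have "cutoff_energy S \<phi> V \<le> edge_sum adj S (\<lambda>x y. 2 * (w x y * (f y - f x) * (V y - V x))
      + 2 * L\<^sup>2 * (w x y * (\<rho> x y)\<^sup>2 * ((V x)\<^sup>2 + (V y)\<^sup>2)))"
    unfolding cutoff_energy_def
  proof (rule edge_sum_mono)
    fix x y assume "adj x y"
    then have "w x y * (((\<phi> x)\<^sup>2 + (\<phi> y)\<^sup>2) / 2 * (V y - V x)\<^sup>2)
      \<le> w x y * (2 * (((\<phi> y)\<^sup>2 * V y - (\<phi> x)\<^sup>2 * V x) * (V y - V x))
          + 2 * L\<^sup>2 * (\<rho> x y)\<^sup>2 * ((V x)\<^sup>2 + (V y)\<^sup>2))"
      using assms by (intro mult_left_mono cutoff_product_rule_ineq rho_nonneg w_nonneg) auto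
    then show "w x y * (((\<phi> x)\<^sup>2 + (\<phi> y)\<^sup>2) / 2 * (V y - V x)\<^sup>2)
      \<le> 2 * (w x y * (f y - f x) * (V y - V x)) + 2 * L\<^sup>2 * (w x y * (\<rho> x y)\<^sup>2 * ((V x)\<^sup>2 + (V y)\<^sup>2))"
      by (simp add: f_def algebra_simps)
  qed
  also have "\<dots> \<le> 2 * edge_sum adj S (\<lambda>x y. w x y * (f y - f x) * (V y - V x))
      + 2 * L\<^sup>2 * (2 * (\<Sum>x\<in>S. m x * (V x)\<^sup>2))"
    unfolding edge_sum_add edge_sum_cmult
    by (intro add_left_mono mult_left_mono edge_sum_intrinsic_le S) auto
  finally show ?thesis
    using green by simp
qed

lemma cutoff_laplacian_sq_le:
  fixes V \<phi> \<psi> :: "'v \<Rightarrow> real" and L :: real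
  assumes S: "finite S" and "L \<ge> 0" and "\<And>x. 0 \<le> \<psi> x"
    and lip: "\<And>x y. adj x y \<Longrightarrow> \<bar>\<psi> y - \<psi> x\<bar> \<le> L * \<rho> x y"
    and supp: "\<And>x. \<psi> x \<noteq> 0 \<Longrightarrow> x \<in> S \<and> {y. adj x y} \<subseteq> S \<and> \<phi> x = 1"
  defines "R \<equiv> laplacian adj w m V"
  shows "(\<Sum>x\<in>S. m x * ((\<psi> x)\<^sup>2 * (R x)\<^sup>2))
    \<le> - (1/2) * edge_sum adj S (\<lambda>x y. w x y * (\<psi> x * \<psi> y) * (2 * (V y - V x) * (R y - R x)))
      + 2 * L\<^sup>2 * cutoff_energy S \<phi> V"
proof -
  define X where "X = (\<Sum>x\<in>S. m x * ((\<psi> x)\<^sup>2 * (R x)\<^sup>2))"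
  define P1 where "P1 = edge_sum adj S (\<lambda>x y. w x y * (\<psi> x * \<psi> y) * ((R y - R x) * (V y - V x)))"
  define P2 where "P2 = edge_sum adj S (\<lambda>x y. w x y * ((\<psi> y - \<psi> x) * (\<psi> y * R y + \<psi> x * R x) * (V y - V x)))"
  have "X = (\<Sum>x\<in>S. m x * ((\<psi> x)\<^sup>2 * R x * laplacian adj w m V x))"
    unfolding X_def R_def by (simp add: power2_eq_square mult.assoc)
  also have "\<dots> = - (1/2) * edge_sum adj S (\<lambda>x y. w x y * ((\<psi> y)\<^sup>2 * R y - (\<psi> x)\<^sup>2 * R x) * (V y - V x))"
    using supp by (subst green_formula[OF S]) auto
  also have "edge_sum adj S (\<lambda>x y. w x y * ((\<psi> y)\<^sup>2 * R y - (\<psi> x)\<^sup>2 * R x) * (V y - V x)) = P1 + P2"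
    unfolding P1_def P2_def
    by (subst edge_sum_add[symmetric]) (rule edge_sum_cong, simp add: algebra_simps power2_eq_square)
  finally have X: "X = - (1/2) * P1 - (1/2) * P2"
    by (simp add: algebra_simps)
  have "- P2 \<le> edge_sum adj S (\<lambda>x y. (1/2) * (w x y * (\<rho> x y)\<^sup>2 * ((\<psi> x)\<^sup>2 * (R x)\<^sup>2 + (\<psi> y)\<^sup>2 * (R y)\<^sup>2))
      + 2 * L\<^sup>2 * (w x y * (((\<phi> x)\<^sup>2 + (\<phi> y)\<^sup>2) / 2 * (V y - V x)\<^sup>2)))"
    unfolding P2_def edge_sum_minus[symmetric]
  proof (rule edge_sum_mono)
    fix x y assume "adj x y"
    then have "w x y * (- ((\<psi> y - \<psi> x) * (\<psi> y * R y + \<psi> x * R x) * (V y - V x)))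
      \<le> w x y * ((\<rho> x y)\<^sup>2 * ((\<psi> x)\<^sup>2 * (R x)\<^sup>2 + (\<psi> y)\<^sup>2 * (R y)\<^sup>2) / 2
          + 2 * L\<^sup>2 * (((\<phi> x)\<^sup>2 + (\<phi> y)\<^sup>2) / 2) * (V y - V x)\<^sup>2)"
      using assms by (intro mult_left_mono cutoff_cross_term_ineq rho_nonneg w_nonneg) auto
    then show "- (w x y * ((\<psi> y - \<psi> x) * (\<psi> y * R y + \<psi> x * R x) * (V y - V x)))
      \<le> (1/2) * (w x y * (\<rho> x y)\<^sup>2 * ((\<psi> x)\<^sup>2 * (R x)\<^sup>2 + (\<psi> y)\<^sup>2 * (R y)\<^sup>2))
        + 2 * L\<^sup>2 * (w x y * (((\<phi> x)\<^sup>2 + (\<phi> y)\<^sup>2) / 2 * (V y - V x)\<^sup>2))"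
      by (simp add: field_simps)
  qed
  also have "\<dots> \<le> (1/2) * (2 * X) + 2 * L\<^sup>2 * cutoff_energy S \<phi> V"
    unfolding edge_sum_add edge_sum_cmult cutoff_energy_def X_def
    by (intro add_right_mono mult_left_mono edge_sum_intrinsic_le S) auto
  finally have "- P2 \<le> X + 2 * L\<^sup>2 * cutoff_energy S \<phi> V"
    by simp
  moreover have "edge_sum adj S (\<lambda>x y. w x y * (\<psi> x * \<psi> y) * (2 * (V y - V x) * (R y - R x))) = 2 * P1"
    unfolding P1_def by (subst edge_sum_cmult[symmetric]) (rule edge_sum_cong, simp add: algebra_simps)
  ultimately show ?thesis
    using X unfolding X_def by simp
qed

lemma cutoff_rho_lipschitz:
  assumes "l > 0"
  shows "\<bar>cutoff l c (\<rho> y z) - cutoff l c (\<rho> x z)\<bar> \<le> 1 / l * \<rho> x y"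
proof -
  have "\<bar>\<rho> y z - \<rho> x z\<bar> / l \<le> \<rho> x y / l"
    using rho_diff_le assms by (intro divide_right_mono) auto
  then show ?thesis
    using cutoff_lipschitz[OF assms, of c "\<rho> y z" "\<rho> x z"] by simp
qed

end

section \<open>Local energies of time derivatives\<close>

locale heat_derivative_tower = intrinsic_graph adj w m \<rho>
  for adj :: "'v \<Rightarrow> 'v \<Rightarrow> bool" and w m \<rho> +
  fixes D :: "nat \<Rightarrow> 'v \<Rightarrow> real \<Rightarrow> real" and x0 :: 'v and s :: real
  assumes D_deriv: "\<And>n x t. t \<le> 0 \<Longrightarrow> (D n x has_real_derivative D (Suc n) x t) (at t within {..0})"
    and D_heat: "\<And>n x t. t \<le> 0 \<Longrightarrow> D (Suc n) x t = laplacian adj w m (\<lambda>y. D n y t) x"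
    and finite_ball: "\<And>R. finite (ball_rho \<rho> x0 R)"
    and jump_le: "\<And>x y. adj x y \<Longrightarrow> \<rho> x y \<le> s"
    and jump_nonneg: "s \<ge> 0"
begin

definition local_energy :: "nat \<Rightarrow> real \<Rightarrow> real \<Rightarrow> real" where
  "local_energy n b r = integral {-b..0} (\<lambda>t. \<Sum>x\<in>ball_rho \<rho> x0 r. m x * (D n x t)\<^sup>2)"

lemma continuous_on_D: "continuous_on {..0} (D n x)"
  using DERIV_continuous[OF D_deriv] by (auto simp: continuous_on_eq_continuous_within)

lemma local_energy_nonneg: "b \<ge> 0 \<Longrightarrow> 0 \<le> local_energy n b r"
  unfolding local_energy_def
  by (intro integral_nonneg integrable_on_nonpos_interval)
    (auto intro!: continuous_intros continuous_on_D sum_nonneg mult_nonneg_nonneg m_nonneg)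

lemma cutoff_support_subset_ball:
  assumes "l > 0" and "cutoff l c (\<rho> x x0) \<noteq> 0"
  shows "x \<in> ball_rho \<rho> x0 (c + l + s) \<and> {y. adj x y} \<subseteq> ball_rho \<rho> x0 (c + l + s)"
proof -
  have "\<rho> x x0 \<le> c + l"
    using cutoff_nonzero_less[OF assms] by simp
  moreover have "\<rho> y x0 \<le> \<rho> x x0 + s" if "adj x y" for y
    using rho_triangle[where x = y and y = x and z = x0] rho_sym[of x y] jump_le[OF that] by simp
  ultimately show ?thesis
    using jump_nonneg unfolding ball_rho_def by fastforce
qed

lemma cutoff_energy_integral_le:
  assumes S: "finite S" and "b > 0" "L \<ge> 0"
    and \<phi>: "\<And>x. 0 \<le> \<phi> x" "\<And>x. \<phi> x \<le> 1"
    and lip: "\<And>x y. adj x y \<Longrightarrow> \<bar>\<phi> y - \<phi> x\<bar> \<le> L * \<rho> x y"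
    and supp: "\<And>x. \<phi> x \<noteq> 0 \<Longrightarrow> x \<in> S \<and> {y. adj x y} \<subseteq> S"
  shows "integral {-(2*b)..0} (\<lambda>t. cutoff_energy S \<phi> (\<lambda>x. D n x t))
    \<le> (1/b + 4 * L\<^sup>2) * integral {-(4*b)..0} (\<lambda>t. \<Sum>x\<in>S. m x * (D n x t)\<^sup>2)"
proof -
  define M where "M t = (\<Sum>x\<in>S. m x * (D n x t)\<^sup>2)" for t
  define Q where "Q t = (\<Sum>x\<in>S. m x * (\<phi> x)\<^sup>2 * (D n x t)\<^sup>2)" for t
  define Q' where "Q' t = (\<Sum>x\<in>S. m x * (\<phi> x)\<^sup>2 * (2 * D n x t * D (Suc n) x t))" for t
  have M: "continuous_on {..0} M" "\<And>t. 0 \<le> M t"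
    unfolding M_def by (auto intro!: continuous_intros continuous_on_D sum_nonneg mult_nonneg_nonneg m_nonneg)
  have Q_le_M: "Q t \<le> M t" for t
    unfolding Q_def M_def using \<phi>
    by (intro sum_mono) (auto intro!: mult_right_mono mult_left_le m_nonneg simp: power_le_one)
  have "integral {-(2*b)..0} (\<lambda>t. cutoff_energy S \<phi> (\<lambda>x. D n x t))
      \<le> 2 / (2*b) * integral {-2*(2*b)..-(2*b)} Q + integral {-2*(2*b)..0} (\<lambda>t. 4 * L\<^sup>2 * M t)"
  proof (rule differential_inequality_integral_le[where F' = Q'])
    show "(Q has_real_derivative Q' t) (at t within {..0})" if "t \<le> 0" for t
      unfolding Q_def Q'_def
      by (auto intro!: derivative_eq_intros D_deriv[OF that] sum.cong simp: mult_ac)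
    show "cutoff_energy S \<phi> (\<lambda>x. D n x t) \<le> - 2 * Q' t + 4 * L\<^sup>2 * M t" if "t \<le> 0" for t
      using cutoff_energy_le[OF S \<open>L \<ge> 0\<close> \<phi>(1) lip supp, of "\<lambda>x. D n x t"] D_heat[OF that]
      unfolding Q'_def M_def by (simp add: algebra_simps)
    show "continuous_on {..0} (\<lambda>t. cutoff_energy S \<phi> (\<lambda>x. D n x t))"
      unfolding cutoff_energy_def
      by (intro continuous_on_edge_sum continuous_intros continuous_on_D)
    show "0 \<le> Q t \<and> 0 \<le> cutoff_energy S \<phi> (\<lambda>x. D n x t) \<and> 0 \<le> 4 * L\<^sup>2 * M t" for t
      unfolding Q_def using M(2) by (auto intro!: sum_nonneg mult_nonneg_nonneg m_nonneg cutoff_energy_nonneg)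
  qed (use \<open>b > 0\<close> M(1) continuous_on_mult_left in auto)
  moreover have "integral {-2*(2*b)..-(2*b)} Q \<le> integral {-(4*b)..0} M"
  proof -
    have "integral {-2*(2*b)..-(2*b)} Q \<le> integral {-2*(2*b)..-(2*b)} M"
      using \<open>b > 0\<close> Q_le_M by (intro integral_le integrable_on_nonpos_interval M(1))
        (auto simp: Q_def intro!: continuous_intros continuous_on_D)
    also have "\<dots> \<le> integral {-(4*b)..0} M"
      using \<open>b > 0\<close> M by (intro integral_subset_le integrable_on_nonpos_interval) auto
    finally show ?thesis .
  qed
  ultimately show ?thesis
    using \<open>b > 0\<close> unfolding M_def by (simp add: field_simps)
qed

lemma cutoff_laplacian_integral_le:
  assumes S: "finite S" and "b > 0" "L \<ge> 0"
    and \<psi>: "\<And>x. 0 \<le> \<psi> x" "\<And>x. \<psi> x \<le> \<phi> x"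
    and lip: "\<And>x y. adj x y \<Longrightarrow> \<bar>\<psi> y - \<psi> x\<bar> \<le> L * \<rho> x y"
    and supp: "\<And>x. \<psi> x \<noteq> 0 \<Longrightarrow> x \<in> S \<and> {y. adj x y} \<subseteq> S \<and> \<phi> x = 1"
  shows "integral {-b..0} (\<lambda>t. \<Sum>x\<in>S. m x * ((\<psi> x)\<^sup>2 * (D (Suc n) x t)\<^sup>2))
    \<le> (1 / (2*b) + 2 * L\<^sup>2) * integral {-(2*b)..0} (\<lambda>t. cutoff_energy S \<phi> (\<lambda>x. D n x t))"
proof -
  define E where "E t = cutoff_energy S \<phi> (\<lambda>x. D n x t)" for t
  define G where "G t = edge_sum adj S (\<lambda>x y. w x y * (\<psi> x * \<psi> y) * (D n y t - D n x t)\<^sup>2)" for t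
  define G' where "G' t = edge_sum adj S (\<lambda>x y. w x y * (\<psi> x * \<psi> y)
    * (2 * (D n y t - D n x t) * (D (Suc n) y t - D (Suc n) x t)))" for t
  have E: "continuous_on {..0} E" "\<And>t. 0 \<le> E t"
    unfolding E_def cutoff_energy_def
    by (intro continuous_on_edge_sum continuous_intros continuous_on_D)
      (fold cutoff_energy_def, rule cutoff_energy_nonneg)
  have G: "continuous_on {..0} G"
    unfolding G_def by (intro continuous_on_edge_sum continuous_intros continuous_on_D)
  have G_le_E: "G t \<le> E t" for t
    unfolding G_def E_def using \<psi> by (rule edge_sum_product_le_cutoff_energy)
  have "integral {-b..0} (\<lambda>t. \<Sum>x\<in>S. m x * ((\<psi> x)\<^sup>2 * (D (Suc n) x t)\<^sup>2))
      \<le> (1/2) / b * integral {-2*b..-b} G + integral {-2*b..0} (\<lambda>t. 2 * L\<^sup>2 * E t)"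
  proof (rule differential_inequality_integral_le[where F' = G'])
    show "(G has_real_derivative G' t) (at t within {..0})" if "t \<le> 0" for t
      unfolding G_def G'_def
      by (intro has_real_derivative_edge_sum) (auto intro!: derivative_eq_intros D_deriv[OF that])
    show "(\<Sum>x\<in>S. m x * ((\<psi> x)\<^sup>2 * (D (Suc n) x t)\<^sup>2)) \<le> - (1/2) * G' t + 2 * L\<^sup>2 * E t"
      if "t \<le> 0" for t
      using cutoff_laplacian_sq_le[OF S \<open>L \<ge> 0\<close> \<psi>(1) lip supp, of "\<lambda>x. D n x t"] D_heat[OF that]
      unfolding G'_def E_def by simp
    show "0 \<le> G t \<and> 0 \<le> (\<Sum>x\<in>S. m x * ((\<psi> x)\<^sup>2 * (D (Suc n) x t)\<^sup>2)) \<and> 0 \<le> 2 * L\<^sup>2 * E t" for t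
      unfolding G_def using E(2) \<psi>(1)
      by (auto intro!: edge_sum_nonneg sum_nonneg mult_nonneg_nonneg m_nonneg w_nonneg)
    show "continuous_on {..0} (\<lambda>t. \<Sum>x\<in>S. m x * ((\<psi> x)\<^sup>2 * (D (Suc n) x t)\<^sup>2))"
      by (intro continuous_intros continuous_on_D)
  qed (use \<open>b > 0\<close> E(1) continuous_on_mult_left in auto)
  moreover have "integral {-2*b..-b} G \<le> integral {-(2*b)..0} E"
  proof -
    have "integral {-2*b..-b} G \<le> integral {-2*b..-b} E"
      using \<open>b > 0\<close> G_le_E by (intro integral_le integrable_on_nonpos_interval G E(1)) auto
    also have "\<dots> \<le> integral {-(2*b)..0} E"
      using \<open>b > 0\<close> E by (intro integral_subset_le integrable_on_nonpos_interval) auto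
    finally show ?thesis .
  qed
  ultimately show ?thesis
    using \<open>b > 0\<close> unfolding E_def by (simp add: field_simps)
qed

lemma local_energy_Suc_le:
  assumes "b > 0"
  shows "local_energy (Suc n) b r \<le> 25 / (2 * b\<^sup>2) * local_energy n (4*b) (r + 2 * sqrt b + s)"
proof -
  define l where "l = sqrt b"
  have l: "l > 0" and L2: "(1/l)\<^sup>2 = 1/b"
    using assms unfolding l_def by (auto simp: power_divide)
  define \<psi> where "\<psi> x = cutoff l r (\<rho> x x0)" for x
  define \<phi> where "\<phi> x = cutoff l (r + l) (\<rho> x x0)" for x
  define S where "S = ball_rho \<rho> x0 (r + 2*l + s)"
  have S: "finite S"
    unfolding S_def by (rule finite_ball)
  have lip: "\<bar>\<psi> y - \<psi> x\<bar> \<le> 1/l * \<rho> x y" "\<bar>\<phi> y - \<phi> x\<bar> \<le> 1/l * \<rho> x y" for x y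
    unfolding \<psi>_def \<phi>_def by (intro cutoff_rho_lipschitz l)+
  have \<phi>_supp: "x \<in> S \<and> {y. adj x y} \<subseteq> S" if "\<phi> x \<noteq> 0" for x
    using cutoff_support_subset_ball[OF l that[unfolded \<phi>_def]] unfolding S_def by (simp add: add_ac)
  have \<psi>_supp: "x \<in> S \<and> {y. adj x y} \<subseteq> S \<and> \<phi> x = 1" if "\<psi> x \<noteq> 0" for x
    using cutoff_nonzero_less[OF l that[unfolded \<psi>_def]] cutoff_eq_one[OF l] \<phi>_supp[of x]
    unfolding \<phi>_def by simp
  have \<psi>_le_\<phi>: "\<psi> x \<le> \<phi> x" for x
  proof (cases "\<psi> x = 0")
    case True
    then show ?thesis by (simp add: \<phi>_def cutoff_nonneg)
  next
    case False
    then show ?thesis using \<psi>_supp[of x] by (simp add: \<psi>_def cutoff_le_one)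
  qed
  have "local_energy (Suc n) b r \<le> integral {-b..0} (\<lambda>t. \<Sum>x\<in>S. m x * ((\<psi> x)\<^sup>2 * (D (Suc n) x t)\<^sup>2))"
    unfolding local_energy_def
  proof (intro integral_le integrable_on_nonpos_interval)
    fix t
    have "(\<Sum>x\<in>ball_rho \<rho> x0 r. m x * (D (Suc n) x t)\<^sup>2)
        = (\<Sum>x\<in>ball_rho \<rho> x0 r. m x * ((\<psi> x)\<^sup>2 * (D (Suc n) x t)\<^sup>2))"
      using cutoff_eq_one[OF l] by (intro sum.cong) (auto simp: \<psi>_def ball_rho_def)
    also have "\<dots> \<le> (\<Sum>x\<in>S. m x * ((\<psi> x)\<^sup>2 * (D (Suc n) x t)\<^sup>2))"
      using l jump_nonneg
      by (intro sum_mono2 S) (auto simp: S_def ball_rho_def intro!: mult_nonneg_nonneg m_nonneg)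
    finally show "(\<Sum>x\<in>ball_rho \<rho> x0 r. m x * (D (Suc n) x t)\<^sup>2)
        \<le> (\<Sum>x\<in>S. m x * ((\<psi> x)\<^sup>2 * (D (Suc n) x t)\<^sup>2))" .
  qed (auto intro!: continuous_intros continuous_on_D)
  also have "\<dots> \<le> (1 / (2*b) + 2 * (1/l)\<^sup>2) * integral {-(2*b)..0} (\<lambda>t. cutoff_energy S \<phi> (\<lambda>x. D n x t))"
    using S assms l cutoff_nonneg \<psi>_le_\<phi> lip(1) \<psi>_supp
    by (intro cutoff_laplacian_integral_le) (auto simp: \<psi>_def)
  also have "\<dots> \<le> (1 / (2*b) + 2 * (1/l)\<^sup>2)
      * ((1/b + 4 * (1/l)\<^sup>2) * integral {-(4*b)..0} (\<lambda>t. \<Sum>x\<in>S. m x * (D n x t)\<^sup>2))"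
    using S assms l cutoff_nonneg cutoff_le_one lip(2) \<phi>_supp
    by (intro mult_left_mono cutoff_energy_integral_le) (auto simp: \<phi>_def)
  also have "\<dots> = 25 / (2 * b\<^sup>2) * local_energy n (4*b) (r + 2 * sqrt b + s)"
    \<comment> \<open>\<open>(1/(2b) + 2/b) * (1/b + 4/b) = 25/(2b\<^sup>2)\<close>\<close>
    unfolding L2 local_energy_def S_def l_def using assms by (simp add: field_simps power2_eq_square)
  finally show ?thesis .
qed

lemma local_energy_iterate_le:
  "b > 0 \<Longrightarrow> local_energy q b r
    \<le> 13^q / b^(2*q) * local_energy 0 (4^q * b) (r + (2^(q+1) - 2) * sqrt b + real q * s)"
proof (induction q arbitrary: b r)
  case 0
  then show ?case by simp
next
  case (Suc q)
  define r' where "r' = r + 2 * sqrt b + s"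
  define J where "J = local_energy 0 (4^Suc q * b) (r + (2^(Suc q + 1) - 2) * sqrt b + real (Suc q) * s)"
  have "J \<ge> 0"
    unfolding J_def using Suc.prems by (intro local_energy_nonneg) simp
  have "sqrt (4*b) = 2 * sqrt b"
    by (simp add: real_sqrt_mult)
  then have IH: "local_energy q (4*b) r' \<le> 13^q / (4*b)^(2*q) * J"
    using Suc.IH[of "4*b" r'] Suc.prems unfolding J_def r'_def by (simp add: algebra_simps)
  have "13^q / (4*b)^(2*q) \<le> 13^q / b^(2*q)"
    using Suc.prems by (intro divide_left_mono power_mono) auto
  moreover have "25 / (2 * b\<^sup>2) \<le> 13 / b\<^sup>2"
    using Suc.prems by (simp add: field_simps)
  ultimately have "25 / (2 * b\<^sup>2) * (13^q / (4*b)^(2*q)) \<le> 13 / b\<^sup>2 * (13^q / b^(2*q))"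
    using Suc.prems by (intro mult_mono) auto
  also have "\<dots> = 13^Suc q / b^(2 * Suc q)"
    by (simp add: power_add field_simps power2_eq_square)
  finally have const: "25 / (2 * b\<^sup>2) * (13^q / (4*b)^(2*q)) \<le> 13^Suc q / b^(2 * Suc q)" .
  have "local_energy (Suc q) b r \<le> 25 / (2 * b\<^sup>2) * local_energy q (4*b) r'"
    unfolding r'_def using Suc.prems by (rule local_energy_Suc_le)
  also have "\<dots> \<le> 25 / (2 * b\<^sup>2) * (13^q / (4*b)^(2*q) * J)"
    using IH by (intro mult_left_mono) auto
  also have "\<dots> \<le> 13^Suc q / b^(2 * Suc q) * J"
    using mult_right_mono[OF const \<open>J \<ge> 0\<close>] by (simp add: mult.assoc)
  finally show ?case
    unfolding J_def .
qed

lemma local_energy_le_volume: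
  assumes "0 \<le> \<tau>" "\<tau> \<le> R\<^sup>2" "r \<le> R"
    and bound: "\<And>y t. y \<in> ball_rho \<rho> x0 R \<Longrightarrow> - (R\<^sup>2) \<le> t \<Longrightarrow> t \<le> 0 \<Longrightarrow> \<bar>D n y t\<bar> \<le> K"
  shows "local_energy n \<tau> r \<le> \<tau> * (vol m (ball_rho \<rho> x0 R) * K\<^sup>2)"
proof -
  have "local_energy n \<tau> r \<le> integral {-\<tau>..0} (\<lambda>_. vol m (ball_rho \<rho> x0 R) * K\<^sup>2)"
    unfolding local_energy_def
  proof (intro integral_le integrable_on_nonpos_interval integrable_const_ivl)
    fix t assume t: "t \<in> {-\<tau>..0}"
    have "(\<Sum>x\<in>ball_rho \<rho> x0 r. m x * (D n x t)\<^sup>2) \<le> (\<Sum>x\<in>ball_rho \<rho> x0 R. m x * (D n x t)\<^sup>2)"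
      using \<open>r \<le> R\<close> by (intro sum_mono2 finite_ball) (auto simp: ball_rho_def intro!: mult_nonneg_nonneg m_nonneg)
    also have "\<dots> \<le> (\<Sum>x\<in>ball_rho \<rho> x0 R. m x * K\<^sup>2)"
    proof (intro sum_mono mult_left_mono m_nonneg)
      fix y assume "y \<in> ball_rho \<rho> x0 R"
      then have "\<bar>D n y t\<bar> \<le> K"
        using bound t assms(2) by auto
      then show "(D n y t)\<^sup>2 \<le> K\<^sup>2"
        using power_mono[of "\<bar>D n y t\<bar>" K 2] by simp
    qed
    finally show "(\<Sum>x\<in>ball_rho \<rho> x0 r. m x * (D n x t)\<^sup>2) \<le> vol m (ball_rho \<rho> x0 R) * K\<^sup>2"
      unfolding vol_def by (simp add: sum_distrib_right)
  qed (auto intro!: continuous_intros continuous_on_D)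
  also have "\<dots> = \<tau> * (vol m (ball_rho \<rho> x0 R) * K\<^sup>2)"
    using \<open>0 \<le> \<tau>\<close> by simp
  finally show ?thesis .
qed

lemma time_derivative_sq_integral_le:
  fixes \<sigma> K :: real and q :: nat and x :: 'v
  assumes "\<sigma> \<ge> 1"
  defines "R \<equiv> \<rho> x x0 + real q * s + 2^(q+1) * \<sigma>"
  assumes bound: "\<And>y t. y \<in> ball_rho \<rho> x0 R \<Longrightarrow> - (R\<^sup>2) \<le> t \<Longrightarrow> t \<le> 0 \<Longrightarrow> \<bar>D 0 y t\<bar> \<le> K"
  shows "m x * integral {-(\<sigma>\<^sup>2)..0} (\<lambda>t. (D q x t)\<^sup>2)
    \<le> 13^q * 4^q * (\<sigma>\<^sup>2 / \<sigma>^(4*q)) * (vol m (ball_rho \<rho> x0 R) * K\<^sup>2)"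
proof -
  define b where "b = \<sigma>\<^sup>2"
  have "b > 0" "sqrt b = \<sigma>"
    unfolding b_def using \<open>\<sigma> \<ge> 1\<close> by auto
  have "0 \<le> real q * s" "0 \<le> \<rho> x x0"
    using jump_nonneg rho_nonneg by simp_all
  have "2^q * \<sigma> \<le> 2^(q+1) * \<sigma>"
    using \<open>\<sigma> \<ge> 1\<close> by simp
  then have "(2^q * \<sigma>)\<^sup>2 \<le> R\<^sup>2"
    unfolding R_def using \<open>\<sigma> \<ge> 1\<close> \<open>0 \<le> real q * s\<close> \<open>0 \<le> \<rho> x x0\<close> by (intro power_mono) auto
  moreover have "(2::real)^q * 2^q = 4^q"
    by (simp add: power_mult_distrib[symmetric])
  ultimately have "4^q * b \<le> R\<^sup>2"
    unfolding b_def by (simp add: power2_eq_square algebra_simps)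
  have "m x * integral {-b..0} (\<lambda>t. (D q x t)\<^sup>2) \<le> local_energy q b (\<rho> x x0)"
    unfolding local_energy_def integral_mult_right[symmetric]
    by (intro integral_le integrable_on_nonpos_interval member_le_sum finite_ball)
      (auto simp: ball_rho_def intro!: continuous_intros continuous_on_D mult_nonneg_nonneg m_nonneg)
  also have "\<dots> \<le> 13^q / b^(2*q) * local_energy 0 (4^q * b) (\<rho> x x0 + (2^(q+1) - 2) * \<sigma> + real q * s)"
    using local_energy_iterate_le[OF \<open>b > 0\<close>] \<open>sqrt b = \<sigma>\<close> by simp
  also have "\<dots> \<le> 13^q / b^(2*q) * (4^q * b * (vol m (ball_rho \<rho> x0 R) * K\<^sup>2))"
    using \<open>b > 0\<close> \<open>4^q * b \<le> R\<^sup>2\<close> \<open>\<sigma> \<ge> 1\<close> bound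
    by (intro mult_left_mono local_energy_le_volume) (auto simp: R_def left_diff_distrib)
  also have "\<dots> = 13^q * 4^q * (\<sigma>\<^sup>2 / \<sigma>^(4*q)) * (vol m (ball_rho \<rho> x0 R) * K\<^sup>2)"
    unfolding b_def by (simp add: power_mult[symmetric])
  finally show ?thesis
    unfolding b_def .
qed

lemma time_derivative_energy_decay:
  fixes Cu C k \<alpha> :: real
  assumes growth: "\<And>R y t. R > 0 \<Longrightarrow> y \<in> ball_rho \<rho> x0 R \<Longrightarrow> - (R\<^sup>2) \<le> t \<Longrightarrow> t \<le> 0
      \<Longrightarrow> \<bar>D 0 y t\<bar> \<le> Cu * (1 + R) powr k"
    and volume: "\<And>R. R > 0 \<Longrightarrow> vol m (ball_rho \<rho> x0 R) \<le> C * (1 + R) powr \<alpha>"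
  obtains K where "\<And>\<sigma>. \<sigma> \<ge> 1 \<Longrightarrow>
    m x * integral {-(\<sigma>\<^sup>2)..0} (\<lambda>t. (D q x t)\<^sup>2) \<le> K * \<sigma> powr (2 + \<alpha> + 2*k - 4 * real q)"
proof
  define A where "A = 1 + \<rho> x x0 + real q * s + 2^(q+1)"
  have "0 \<le> vol m (ball_rho \<rho> x0 1)"
    unfolding vol_def by (intro sum_nonneg m_nonneg)
  then have "0 \<le> C * 2 powr \<alpha>"
    using volume[of 1] by simp
  then have "C \<ge> 0"
    by (simp add: zero_le_mult_iff)
  fix \<sigma> :: real
  assume "\<sigma> \<ge> 1"
  define R where "R = \<rho> x x0 + real q * s + 2^(q+1) * \<sigma>"
  have "0 \<le> real q * s" "0 \<le> \<rho> x x0" "\<sigma> \<le> 2^(q+1) * \<sigma>"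
    using jump_nonneg rho_nonneg \<open>\<sigma> \<ge> 1\<close> mult_right_mono[of 1 "2^(q+1)" \<sigma>]
      one_le_power[of "2::real" "q+1"] by simp_all
  moreover have "\<rho> x x0 \<le> \<rho> x x0 * \<sigma>" "real q * s \<le> real q * s * \<sigma>"
    using calculation \<open>\<sigma> \<ge> 1\<close> by (simp_all add: mult_le_cancel_left1)
  ultimately have "R > 0" "\<sigma> \<le> 1 + R" "1 + R \<le> A * \<sigma>"
    unfolding R_def A_def distrib_right using \<open>\<sigma> \<ge> 1\<close> by linarith+
  have "\<sigma> powr (4 * real q) = \<sigma>^(4*q)"
    using \<open>\<sigma> \<ge> 1\<close> powr_realpow[of \<sigma> "4*q"] by simp
  then have decay: "\<sigma>\<^sup>2 / \<sigma>^(4*q) = \<sigma> powr (2 - 4 * real q)"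
    using \<open>\<sigma> \<ge> 1\<close> by (simp add: powr_diff powr_numeral)
  have "m x * integral {-(\<sigma>\<^sup>2)..0} (\<lambda>t. (D q x t)\<^sup>2)
      \<le> 13^q * 4^q * (\<sigma>\<^sup>2 / \<sigma>^(4*q)) * (vol m (ball_rho \<rho> x0 R) * (Cu * (1 + R) powr k)\<^sup>2)"
    unfolding R_def using \<open>\<sigma> \<ge> 1\<close> growth \<open>R > 0\<close>
    by (intro time_derivative_sq_integral_le) (auto simp: R_def)
  also have "\<dots> \<le> 13^q * 4^q * (\<sigma>\<^sup>2 / \<sigma>^(4*q)) * (C * (1 + R) powr \<alpha> * (Cu * (1 + R) powr k)\<^sup>2)"
    using volume[OF \<open>R > 0\<close>] \<open>\<sigma> \<ge> 1\<close> by (intro mult_left_mono mult_right_mono) auto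
  also have "\<dots> = 13^q * 4^q * C * Cu\<^sup>2 * (\<sigma>\<^sup>2 / \<sigma>^(4*q)) * ((1 + R) powr \<alpha> * (1 + R) powr (2*k))"
    using \<open>R > 0\<close> by (simp add: power_mult_distrib powr_power mult_ac)
  also have "\<dots> = 13^q * 4^q * C * Cu\<^sup>2 * \<sigma> powr (2 - 4 * real q) * (1 + R) powr (\<alpha> + 2*k)"
    unfolding decay powr_add ..
  also have "\<dots> \<le> 13^q * 4^q * C * Cu\<^sup>2 * \<sigma> powr (2 - 4 * real q) * (max 1 (A powr (\<alpha> + 2*k)) * \<sigma> powr (\<alpha> + 2*k))"
    using \<open>C \<ge> 0\<close> \<open>\<sigma> \<le> 1 + R\<close> \<open>1 + R \<le> A * \<sigma>\<close> \<open>\<sigma> \<ge> 1\<close>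
    by (intro mult_left_mono powr_le_max_powr_mult) auto
  also have "\<dots> = 13^q * 4^q * C * Cu\<^sup>2 * max 1 (A powr (\<alpha> + 2*k)) * \<sigma> powr (2 + \<alpha> + 2*k - 4 * real q)"
    by (simp add: powr_add[symmetric] algebra_simps)
  finally show "m x * integral {-(\<sigma>\<^sup>2)..0} (\<lambda>t. (D q x t)\<^sup>2)
      \<le> 13^q * 4^q * C * Cu\<^sup>2 * max 1 (A powr (\<alpha> + 2*k)) * \<sigma> powr (2 + \<alpha> + 2*k - 4 * real q)" .
qed

lemma time_derivative_vanishes:
  fixes Cu C k \<alpha> :: real
  assumes growth: "\<And>R y t. R > 0 \<Longrightarrow> y \<in> ball_rho \<rho> x0 R \<Longrightarrow> - (R\<^sup>2) \<le> t \<Longrightarrow> t \<le> 0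
      \<Longrightarrow> \<bar>D 0 y t\<bar> \<le> Cu * (1 + R) powr k"
    and volume: "\<And>R. R > 0 \<Longrightarrow> vol m (ball_rho \<rho> x0 R) \<le> C * (1 + R) powr \<alpha>"
    and "4 * real q > 2*k + \<alpha> + 2" and "t \<le> 0"
  shows "D q x t = 0"
proof -
  obtain K where K: "\<And>\<sigma>. \<sigma> \<ge> 1 \<Longrightarrow>
      m x * integral {-(\<sigma>\<^sup>2)..0} (\<lambda>t. (D q x t)\<^sup>2) \<le> K * \<sigma> powr (2 + \<alpha> + 2*k - 4 * real q)"
    using time_derivative_energy_decay[OF growth volume] by blast
  define J where "J b = integral {-b..0} (\<lambda>t. (D q x t)\<^sup>2)" for b
  have cont: "continuous_on {..0} (\<lambda>t. (D q x t)\<^sup>2)"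
    by (intro continuous_intros continuous_on_D)
  define b where "b = 1 - t"
  have "b \<ge> 1"
    unfolding b_def using \<open>t \<le> 0\<close> by simp
  have "m x * J b \<le> 0"
  proof (rule nonpos_if_le_powr_neg)
    show "2 + \<alpha> + 2*k - 4 * real q < 0"
      using assms(3) by simp
    fix \<sigma> assume "\<sigma> \<ge> b"
    moreover have "\<sigma> \<le> \<sigma>\<^sup>2"
      using \<open>\<sigma> \<ge> b\<close> \<open>b \<ge> 1\<close> by (simp add: power2_eq_square mult_le_cancel_left1)
    ultimately have "b \<le> \<sigma>\<^sup>2"
      by linarith
    then have "J b \<le> J (\<sigma>\<^sup>2)"
      unfolding J_def using \<open>b \<ge> 1\<close> cont
      by (intro integral_subset_le integrable_on_nonpos_interval) auto
    then have "m x * J b \<le> m x * J (\<sigma>\<^sup>2)"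
      using m_nonneg by (rule mult_left_mono)
    also have "\<dots> \<le> K * \<sigma> powr (2 + \<alpha> + 2*k - 4 * real q)"
      unfolding J_def using K \<open>\<sigma> \<ge> b\<close> \<open>b \<ge> 1\<close> by simp
    finally show "m x * J b \<le> K * \<sigma> powr (2 + \<alpha> + 2*k - 4 * real q)" .
  qed
  moreover have "J b \<ge> 0"
    unfolding J_def using cont \<open>b \<ge> 1\<close> by (intro integral_nonneg integrable_on_nonpos_interval) auto
  ultimately have "J b = 0"
    using m_pos[of x] by (simp add: mult_le_0_iff)
  then have "((\<lambda>t. (D q x t)\<^sup>2) has_integral 0) (cbox (-b) 0)"
    using integrable_integral[OF integrable_on_nonpos_interval[OF cont, of 0 "-b"]]
    unfolding J_def by (simp add: cbox_interval)
  then have "(D q x t)\<^sup>2 = 0"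
    using \<open>b \<ge> 1\<close> \<open>t \<le> 0\<close> continuous_on_subset[OF cont, of "cbox (-b) 0"]
    by (intro has_integral_0_cbox_imp_0[of "-b" 0]) (auto simp: b_def)
  then show ?thesis
    by simp
qed

end

section \<open>Ancient solutions of polynomial growth\<close>

lemma time_derivs_heat_equation:
  assumes "ancient_solution adj w m u" "time_derivs u D" "t \<le> 0"
  shows "D (Suc n) x t = laplacian adj w m (\<lambda>y. D n y t) x"
  using assms(3)
proof (induction n arbitrary: x t)
  case 0
  obtain D' where D': "time_derivs u D'" "\<And>x t. t \<le> 0 \<Longrightarrow> D' 1 x t = laplacian adj w m (\<lambda>y. u y t) x"
    using assms(1) unfolding ancient_solution_def by blast
  have "D 1 x t = D' 1 x t"
    by (rule has_real_derivative_nonpos_unique[of t "D 0 x" _ "D' 0 x"])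
      (use D'(1) assms(2) 0 in \<open>auto simp: time_derivs_def\<close>)
  moreover have "(\<lambda>y. u y t) = (\<lambda>y. D 0 y t)"
    using assms(2) 0 unfolding time_derivs_def by simp
  ultimately show ?case
    using D'(2)[OF 0] by simp
next
  case (Suc n)
  have "((\<lambda>s. laplacian adj w m (\<lambda>y. D n y s) x) has_real_derivative laplacian adj w m (\<lambda>y. D (Suc n) y t) x)
      (at t within {..0})"
    unfolding laplacian_def using assms(2) Suc.prems unfolding time_derivs_def
    by (intro DERIV_sum DERIV_cmult DERIV_diff) auto
  then show ?case
    by (rule has_real_derivative_nonpos_unique[of t "D (Suc n) x", rotated 2])
      (use assms(2) Suc in \<open>auto simp: time_derivs_def\<close>)
qed

lemma growth_bound_recentre:
  fixes u :: "'v \<Rightarrow> real \<Rightarrow> real" and z z' :: 'v and k Cu :: real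
  assumes "pseudometric \<rho>" "k \<ge> 0"
    and growth: "\<And>R y t. R > 0 \<Longrightarrow> y \<in> ball_rho \<rho> z R \<Longrightarrow> - (R\<^sup>2) \<le> t \<Longrightarrow> t \<le> 0
      \<Longrightarrow> \<bar>u y t\<bar> \<le> Cu * (1 + R) powr k"
  obtains Cu' where "\<And>R y t. R > 0 \<Longrightarrow> y \<in> ball_rho \<rho> z' R \<Longrightarrow> - (R\<^sup>2) \<le> t \<Longrightarrow> t \<le> 0
      \<Longrightarrow> \<bar>u y t\<bar> \<le> Cu' * (1 + R) powr k"
proof
  define d where "d = \<rho> z' z"
  have "d \<ge> 0"
    using assms(1) unfolding d_def pseudometric_def by blast
  fix R y t
  assume "R > 0" "y \<in> ball_rho \<rho> z' R" "- (R\<^sup>2) \<le> t" "t \<le> 0"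
  moreover have "\<rho> y z \<le> \<rho> y z' + \<rho> z' z"
    using assms(1) unfolding pseudometric_def by blast
  ultimately have "y \<in> ball_rho \<rho> z (R + d)"
    unfolding ball_rho_def d_def by simp
  moreover have "R\<^sup>2 \<le> (R + d)\<^sup>2"
    using \<open>R > 0\<close> \<open>d \<ge> 0\<close> by (intro power_mono) auto
  then have "- ((R + d)\<^sup>2) \<le> t"
    using \<open>- (R\<^sup>2) \<le> t\<close> by linarith
  ultimately have "\<bar>u y t\<bar> \<le> Cu * (1 + (R + d)) powr k"
    using growth \<open>R > 0\<close> \<open>d \<ge> 0\<close> \<open>t \<le> 0\<close> by simp
  also have "\<dots> \<le> \<bar>Cu\<bar> * ((1 + d) * (1 + R)) powr k"
    using \<open>R > 0\<close> \<open>d \<ge> 0\<close> \<open>k \<ge> 0\<close>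
    by (intro mult_mono powr_mono2) (auto simp: algebra_simps)
  finally show "\<bar>u y t\<bar> \<le> \<bar>Cu\<bar> * (1 + d) powr k * (1 + R) powr k"
    using \<open>R > 0\<close> \<open>d \<ge> 0\<close> by (simp add: powr_mult mult.assoc)
qed

lemma time_derivs_vanish:
  fixes Cu C k \<alpha> :: real
  assumes "intrinsic_graph adj w m \<rho>" "ancient_solution adj w m u" "time_derivs u D"
    and "\<And>R. finite (ball_rho \<rho> x0 R)" "\<And>x y. adj x y \<Longrightarrow> \<rho> x y \<le> s"
    and growth: "\<And>R y t. R > 0 \<Longrightarrow> y \<in> ball_rho \<rho> x0 R \<Longrightarrow> - (R\<^sup>2) \<le> t \<Longrightarrow> t \<le> 0
      \<Longrightarrow> \<bar>u y t\<bar> \<le> Cu * (1 + R) powr k"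
    and volume: "\<And>R. R > 0 \<Longrightarrow> vol m (ball_rho \<rho> x0 R) \<le> C * (1 + R) powr \<alpha>"
    and "4 * real q > 2*k + \<alpha> + 2" "t \<le> 0"
  shows "D q x t = 0"
proof -
  interpret intrinsic_graph adj w m \<rho>
    by fact
  interpret heat_derivative_tower adj w m \<rho> D x0 "max s 0"
    using assms(3-5) time_derivs_heat_equation[OF assms(2,3)]
    by (intro heat_derivative_tower.intro intrinsic_graph_axioms heat_derivative_tower_axioms.intro)
      (auto simp: time_derivs_def max.coboundedI1)
  show ?thesis
    using growth assms(3) volume assms(8,9)
    by (intro time_derivative_vanishes[where Cu = Cu and C = C and k = k and \<alpha> = \<alpha>])
      (auto simp: time_derivs_def)
qed

theorem corollary3p2:
  fixes adj :: "'v \<Rightarrow> 'v \<Rightarrow> bool" and w :: "'v \<Rightarrow> 'v \<Rightarrow> real" and m :: "'v \<Rightarrow> real"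
    and \<rho> :: "'v \<Rightarrow> 'v \<Rightarrow> real" and x0 :: 'v and \<alpha> C k :: real
    and u :: "'v \<Rightarrow> real \<Rightarrow> real" and q :: nat
  assumes "weighted_graph adj w m"
    and "intrinsic adj w m \<rho>"
    and "\<forall>x R. finite (ball_rho \<rho> x R)"
    and "\<exists>s. \<forall>x y. adj x y \<longrightarrow> \<rho> x y \<le> s"
    and "\<forall>R>0. vol m (ball_rho \<rho> x0 R) \<le> C * (1 + R) powr \<alpha>"
    and "k > 0"
    and "poly_growth_ancient adj w m \<rho> k u"
    and "4 * real q > 2 * k + \<alpha> + 2"
  shows "(\<forall>D. time_derivs u D \<longrightarrow> (\<forall>x t. t \<le> 0 \<longrightarrow> D q x t = 0)) \<and>
         (\<exists>p :: nat \<Rightarrow> 'v \<Rightarrow> real. \<forall>x t. t \<le> 0 \<longrightarrow> u x t = (\<Sum>i<q. p i x * t ^ i))"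
proof -
  have ancient: "ancient_solution adj w m u"
    using assms(7) unfolding poly_growth_ancient_def by blast
  have "pseudometric \<rho>"
    using assms(2) unfolding intrinsic_def by blast
  obtain x1 Cu where "\<And>R y t. R > 0 \<Longrightarrow> y \<in> ball_rho \<rho> x1 R \<Longrightarrow> - (R\<^sup>2) \<le> t \<Longrightarrow> t \<le> 0
      \<Longrightarrow> \<bar>u y t\<bar> \<le> Cu * (1 + R) powr k"
    using assms(7) unfolding poly_growth_ancient_def by blast
  then obtain Cu' where growth: "\<And>R y t. R > 0 \<Longrightarrow> y \<in> ball_rho \<rho> x0 R \<Longrightarrow> - (R\<^sup>2) \<le> t \<Longrightarrow> t \<le> 0
      \<Longrightarrow> \<bar>u y t\<bar> \<le> Cu' * (1 + R) powr k"
    by (rule growth_bound_recentre[where z' = x0, rotated 2]) (use \<open>pseudometric \<rho>\<close> assms(6) in auto)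
  obtain s where "\<And>x y. adj x y \<Longrightarrow> \<rho> x y \<le> s"
    using assms(4) by blast
  then have vanishes: "D q x t = 0" if "time_derivs u D" "t \<le> 0" for D x t
    using time_derivs_vanish[OF intrinsic_graphI[OF assms(1,2)] ancient that(1) _ _ growth _ assms(8) that(2)]
      assms(3,5) by blast
  obtain D where D: "time_derivs u D"
    using ancient unfolding ancient_solution_def by blast
  have "u x t = (\<Sum>i<q. D i x 0 / fact i * t ^ i)" if "t \<le> 0" for x t
    using taylor_polynomial_nonpos[of "\<lambda>n. D n x" q t] D vanishes[OF D] that
    unfolding time_derivs_def by auto
  then have "\<exists>p :: nat \<Rightarrow> 'v \<Rightarrow> real. \<forall>x t. t \<le> 0 \<longrightarrow> u x t = (\<Sum>i<q. p i x * t ^ i)"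
    by (intro exI[of _ "\<lambda>i x. D i x 0 / fact i"]) simp
  with vanishes show ?thesis
    by blast
qed

end
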